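(* Let $X=X_1\times\cdots\times X_n$ be a finite product space, $\theta:X\to\mathbb{R}\cup\{-\infty\}$ a potential function with $Z=\sum_x\exp(\theta(x))>0$, and $p(x)=\exp(\theta(x))/Z$ the Gibbs distribution. Let $\{\gamma_i(x_i)\}_{i,\,x_i\in X_i}$ be i.i.d. random variables following the zero-mean Gumbel distribution. Consider the following procedure (one pass): for $j=1,\dots,n$, with $x_1,\dots,x_{j-1}$ already fixed, set for each $x_j\in X_j$ $$p_j(x_j)=\frac{\exp\big(E_\gamma\big[\max_{x_{j+1},\dots,x_n}\{\theta(x)+\sum_{i=j+1}^n\gamma_i(x_i)\}\big]\big)}{\exp\big(E_\gamma\big[\max_{x_j,\dots,x_n}\{\theta(x)+\sum_{i=j}^n\gamma_i(x_i)\}\big]\big)},$$ set $p_j(r)=1-\sum_{x_j}p_j(x_j)$ for an extra symbol $r$, and sample an element from $p_j(\cdot)$; if $r$ is sampled the pass rejects (and the algorithm restarts with $j=1$), otherwise the sampled $x_j$ is fixed and the iteration continues; if the pass reaches $j=n$ without rejection, it accepts and outputs $(x_1,\dots,x_n)$. Then for every $x\in X$, $$P\big[\text{the algorithm outputs }x\;\big|\;\text{the algorithm accepts}\big]=p(x).$$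
   Context: The zero-mean Gumbel distribution is the distribution with cumulative distribution function $F(t)=\exp(-\exp(-(t+c)))$, where $c$ is the Euler constant. The expectations $E_\gamma$ in $p_j$ are exact expectations over the Gumbel perturbations (the quantities $p_j(\cdot)$ are deterministic given $x_1,\dots,x_{j-1}$); the only randomness in the procedure is the sampling from $p_j(\cdot)$. *)

theory Defs
  imports "HOL-Probability.Probability"
begin

text \<open>Coordinates are indexed by i < n (0-based); an element of X = X_0 x ... x X_(n-1)
  is a function in PiE {..<n} X.  The potential takes values in ereal, with the
  standing assumption that it never takes the value +infinity.\<close>

fun expo :: "ereal \<Rightarrow> real" where
  "expo (ereal r) = exp r"
| "expo PInfty = 0"
| "expo MInfty = 0"

text \<open>Zero-mean Gumbel distribution, given by its CDF F(t) = exp(-exp(-(t+c))).\<close>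
definition gumbel :: "real measure" where
  "gumbel = interval_measure (\<lambda>t. exp (- exp (- (t + euler_mascheroni))))"

text \<open>Index set of the Gumbel perturbations gamma_i(x_i).\<close>
definition gidx :: "nat \<Rightarrow> (nat \<Rightarrow> 'a set) \<Rightarrow> (nat \<times> 'a) set" where
  "gidx n X = Sigma {..<n} X"

definition gumbel_family :: "nat \<Rightarrow> (nat \<Rightarrow> 'a set) \<Rightarrow> (nat \<times> 'a \<Rightarrow> real) measure" where
  "gumbel_family n X = PiM (gidx n X) (\<lambda>_. gumbel)"

definition completions :: "nat \<Rightarrow> (nat \<Rightarrow> 'a set) \<Rightarrow> nat \<Rightarrow> (nat \<Rightarrow> 'a) \<Rightarrow> (nat \<Rightarrow> 'a) set" where
  "completions n X j y = {z \<in> PiE {..<n} X. \<forall>i<j. z i = y i}"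

text \<open>U n X \<theta> j y = E_gamma [ max over completions z of y of
   theta(z) + sum_{i=j}^{n-1} gamma_i(z_i) ]  (an ereal; -infinity iff every completion has
   theta = -infinity, in which case the maximum is identically -infinity).\<close>
definition U :: "nat \<Rightarrow> (nat \<Rightarrow> 'a set) \<Rightarrow> ((nat \<Rightarrow> 'a) \<Rightarrow> ereal) \<Rightarrow> nat \<Rightarrow> (nat \<Rightarrow> 'a) \<Rightarrow> ereal" where
  "U n X \<theta> j y =
     (let F = {z \<in> completions n X j y. \<theta> z \<noteq> -\<infinity>} in
      if F = {} then -\<infinity>
      else ereal (\<integral>\<gamma>. Max ((\<lambda>z. real_of_ereal (\<theta> z) + (\<Sum>i\<in>{j..<n}. \<gamma> (i, z i))) ` F)
                       \<partial>gumbel_family n X))"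

text \<open>p_j(v) for the prefix y (step j, 0-based, choosing coordinate j).\<close>
definition pj :: "nat \<Rightarrow> (nat \<Rightarrow> 'a set) \<Rightarrow> ((nat \<Rightarrow> 'a) \<Rightarrow> ereal) \<Rightarrow> nat \<Rightarrow> (nat \<Rightarrow> 'a) \<Rightarrow> 'a \<Rightarrow> real" where
  "pj n X \<theta> j y v = expo (U n X \<theta> (Suc j) (y(j := v))) / expo (U n X \<theta> j y)"

text \<open>Sampling distribution at step j: Some v stands for v \<in> X j, None for the reject symbol r.\<close>
definition step_pmf :: "nat \<Rightarrow> (nat \<Rightarrow> 'a set) \<Rightarrow> ((nat \<Rightarrow> 'a) \<Rightarrow> ereal) \<Rightarrow> nat \<Rightarrow> (nat \<Rightarrow> 'a) \<Rightarrow> 'a option pmf" where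
  "step_pmf n X \<theta> j y = embed_pmf (\<lambda>w. case w of
       None \<Rightarrow> 1 - (\<Sum>v\<in>X j. pj n X \<theta> j y v)
     | Some v \<Rightarrow> (if v \<in> X j then pj n X \<theta> j y v else 0))"

text \<open>One pass of the procedure, with k steps remaining, currently at step j with prefix y.
  Result None = reject, Some x = accept with output x.\<close>
primrec pass_from :: "nat \<Rightarrow> (nat \<Rightarrow> 'a set) \<Rightarrow> ((nat \<Rightarrow> 'a) \<Rightarrow> ereal) \<Rightarrow> nat \<Rightarrow> nat \<Rightarrow> (nat \<Rightarrow> 'a) \<Rightarrow> (nat \<Rightarrow> 'a) option pmf" where
  "pass_from n X \<theta> 0 j y = return_pmf (Some y)"
| "pass_from n X \<theta> (Suc k) j y =
     bind_pmf (step_pmf n X \<theta> j y)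
       (\<lambda>w. case w of None \<Rightarrow> return_pmf None
                    | Some v \<Rightarrow> pass_from n X \<theta> k (Suc j) (y(j := v)))"

definition pass :: "nat \<Rightarrow> (nat \<Rightarrow> 'a set) \<Rightarrow> ((nat \<Rightarrow> 'a) \<Rightarrow> ereal) \<Rightarrow> (nat \<Rightarrow> 'a) option pmf" where
  "pass n X \<theta> = pass_from n X \<theta> n 0 (\<lambda>_. undefined)"

end

theory Submission
  imports Defs
begin

text \<open>Write \<open>M j y\<close> for \<open>U n X \<theta> j y\<close>, the expected perturbed maximum over the
  completions of the prefix \<open>y\<close>, so that \<open>pj n X \<theta> j y v = exp (M (j+1) (y(j := v))) / exp (M j y)\<close>.
  Two properties of independent zero-mean Gumbel perturbations \<open>\<gamma>\<close> drive the proof.  By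
  max-stability, \<open>E[max\<^sub>v (\<gamma> v + a v)] = ln (\<Sum>v. exp (a v))\<close>.  And replacing quantities
  that are independent of the \<open>\<gamma> v\<close> by their means can only lower an expected maximum
  (Jensen's inequality for \<open>max\<close>).  Conditioning on the perturbations of coordinate \<open>j\<close> thus
  gives \<open>(\<Sum>v. exp (M (j+1) (y(j := v)))) \<le> exp (M j y)\<close>: every step distribution is a
  sub-probability.  Along a pass that outputs \<open>x\<close> the product of the \<open>pj\<close> telescopes to
  \<open>exp (\<theta> x) / exp (M 0 y)\<close>, a constant multiple of the Gibbs weight, so conditioned on
  acceptance the output is Gibbs distributed.\<close>

section \<open>The Gumbel distribution\<close>

definition gumbel_cdf :: "real \<Rightarrow> real" where
  "gumbel_cdf t = exp (- exp (- (t + euler_mascheroni)))"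

lemma gumbel_eq_interval_measure: "gumbel = interval_measure gumbel_cdf"
  by (simp add: gumbel_def gumbel_cdf_def[abs_def])

lemma mono_gumbel_cdf: "x \<le> y \<Longrightarrow> gumbel_cdf x \<le> gumbel_cdf y"
  by (simp add: gumbel_cdf_def)

lemma continuous_gumbel_cdf: "continuous (at_right a) gumbel_cdf"
  unfolding gumbel_cdf_def by (intro continuous_intros)

lemma gumbel_cdf_at_bot: "(gumbel_cdf \<longlongrightarrow> 0) at_bot"
  unfolding gumbel_cdf_def by real_asymp

lemma gumbel_cdf_at_top: "(gumbel_cdf \<longlongrightarrow> 1) at_top"
  unfolding gumbel_cdf_def by real_asymp

lemma real_distribution_gumbel: "real_distribution gumbel"
  unfolding gumbel_eq_interval_measure
  by (rule real_distribution_interval_measure[OF mono_gumbel_cdf continuous_gumbel_cdf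
        gumbel_cdf_at_bot gumbel_cdf_at_top])

lemma cdf_gumbel: "cdf gumbel = gumbel_cdf"
  unfolding gumbel_eq_interval_measure
  by (rule cdf_interval_measure[OF mono_gumbel_cdf continuous_gumbel_cdf gumbel_cdf_at_bot])

lemma measure_gumbel_atMost: "measure gumbel {..x} = gumbel_cdf x"
  using cdf_gumbel by (simp add: cdf_def fun_eq_iff)

lemma prob_space_gumbel: "prob_space gumbel"
  using real_distribution_gumbel by (simp add: real_distribution_def)

lemma sets_gumbel [simp, measurable_cong]: "sets gumbel = sets borel"
  by (simp add: gumbel_def)

lemma space_gumbel [simp]: "space gumbel = UNIV"
  by (simp add: gumbel_def)

lemma has_bochner_integral_exponential_density_powr:
  assumes "s > 0"
  shows "has_bochner_integral lborel (\<lambda>u. exponential_density 1 u * u powr (s - 1)) (Gamma s)"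
proof -
  have "((\<lambda>t. t powr (s - 1) / exp t) has_integral Gamma s) {0..}"
    by (rule Gamma_integral_real[OF assms])
  then have "((\<lambda>t. if t \<in> {0..} then t powr (s - 1) / exp t else 0) has_integral Gamma s) UNIV"
    by (simp only: has_integral_restrict_UNIV)
  moreover have "(if t \<in> {0..} then t powr (s - 1) / exp t else 0)
      = exponential_density 1 t * t powr (s - 1)" for t :: real
    by (simp add: exponential_density_def exp_minus divide_inverse mult.commute)
  ultimately have "((\<lambda>u. exponential_density 1 u * u powr (s - 1)) has_integral Gamma s) UNIV"
    by simp
  then have "(\<integral>\<^sup>+u. exponential_density 1 u * u powr (s - 1) \<partial>lborel) = ennreal (Gamma s)"
    by (intro nn_integral_has_integral_lborel) (auto simp: exponential_density_nonneg)
  then show ?thesis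
    using Gamma_real_pos[OF assms]
    by (intro has_bochner_integral_nn_integral) (auto simp: exponential_density_nonneg)
qed

lemma abs_ln_le:
  fixes u :: real
  assumes "u > 0"
  shows "\<bar>ln u\<bar> \<le> 2 * u powr (- 1/2) + u"
proof (cases "u \<ge> 1")
  case True
  then have "0 \<le> ln u" by simp
  then show ?thesis
    using ln_le_minus_one[OF assms] powr_ge_zero[of u "- 1/2"] by linarith
next
  case False
  have "ln (1 / sqrt u) \<le> 1 / sqrt u - 1"
    using assms by (intro ln_le_minus_one) simp
  moreover have "ln u = - 2 * ln (1 / sqrt u)"
    using assms by (simp add: ln_div ln_sqrt)
  moreover have "u powr (- 1/2) = 1 / sqrt u"
    using assms by (simp add: powr_minus_divide powr_half_sqrt[symmetric])
  ultimately show ?thesis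
    using False assms by simp
qed

lemma integrable_exponential_density_ln:
  "integrable lborel (\<lambda>u. exponential_density 1 u * ln u)"
proof (rule Bochner_Integration.integrable_bound)
  have "integrable lborel (\<lambda>u. exponential_density 1 u * u powr (1/2 - 1))"
    and "integrable lborel (\<lambda>u. exponential_density 1 u * u powr (2 - 1))"
    using has_bochner_integral_exponential_density_powr[of "1/2"]
      has_bochner_integral_exponential_density_powr[of 2]
    by (auto simp: has_bochner_integral_iff)
  then show "integrable lborel (\<lambda>u. 2 * (exponential_density 1 u * u powr (1/2 - 1))
      + exponential_density 1 u * u powr (2 - 1))"
    by auto
  show "AE u in lborel. norm (exponential_density 1 u * ln u) \<le>
      norm (2 * (exponential_density 1 u * u powr (1/2 - 1)) + exponential_density 1 u * u powr (2 - 1))"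
  proof (rule AE_I2)
    fix u :: real
    show "norm (exponential_density 1 u * ln u) \<le>
      norm (2 * (exponential_density 1 u * u powr (1/2 - 1)) + exponential_density 1 u * u powr (2 - 1))"
    proof (cases "u > 0")
      case True
      have "exponential_density 1 u * \<bar>ln u\<bar> \<le> exponential_density 1 u * (2 * u powr (- 1/2) + u)"
        using abs_ln_le[OF True] by (intro mult_left_mono exponential_density_nonneg) auto
      then show ?thesis
        using True exponential_density_nonneg[of 1 u]
        by (simp add: abs_mult distrib_left)
    next
      case False
      then show ?thesis by (auto simp: exponential_density_def)
    qed
  qed
qed measurable

lemma mult_ln_le_powr:
  fixes u h :: real
  assumes "u > 0"
  shows "h * ln u \<le> u powr h - 1"
proof -
  have "u powr h = exp (h * ln u)"
    using assms by (simp add: powr_def mult.commute)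
  then show ?thesis
    using exp_ge_add_one_self[of "h * ln u"] by linarith
qed

lemma mult_integral_exponential_density_ln_le:
  assumes "h > -1"
  shows "h * (\<integral>u. exponential_density 1 u * ln u \<partial>lborel) \<le> Gamma (1 + h) - 1"
proof -
  let ?e = "exponential_density 1"
  have G: "has_bochner_integral lborel (\<lambda>u. ?e u * u powr h - ?e u * u powr 0) (Gamma (1 + h) - 1)"
    using has_bochner_integral_exponential_density_powr[of "1 + h"]
      has_bochner_integral_exponential_density_powr[of 1] assms
    by (intro has_bochner_integral_diff) auto
  have "h * (\<integral>u. ?e u * ln u \<partial>lborel) = (\<integral>u. ?e u * (h * ln u) \<partial>lborel)"
    by (simp add: ac_simps)
  also have "\<dots> \<le> (\<integral>u. ?e u * u powr h - ?e u * u powr 0 \<partial>lborel)"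
  proof (rule integral_mono)
    show "integrable lborel (\<lambda>u. ?e u * (h * ln u))"
      using integrable_exponential_density_ln by (simp add: ac_simps)
    show "integrable lborel (\<lambda>u. ?e u * u powr h - ?e u * u powr 0)"
      using G by (simp add: has_bochner_integral_iff)
    show "?e u * (h * ln u) \<le> ?e u * u powr h - ?e u * u powr 0" for u
    proof (cases "u > 0")
      case True
      then have "?e u * (h * ln u) \<le> ?e u * (u powr h - 1)"
        by (intro mult_left_mono mult_ln_le_powr exponential_density_nonneg) simp_all
      then show ?thesis
        using True by (simp add: right_diff_distrib)
    qed (auto simp: exponential_density_def)
  qed
  also have "\<dots> = Gamma (1 + h) - 1"
    using G by (simp add: has_bochner_integral_iff)
  finally show ?thesis .
qed

text \<open>The two one-sided bounds of the previous lemma squeeze the integral onto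
  \<open>Gamma' 1 = - euler_mascheroni\<close>.\<close>

lemma integral_exponential_density_ln:
  "(\<integral>u. exponential_density 1 u * ln u \<partial>lborel) = - euler_mascheroni"
proof -
  let ?L = "\<integral>u. exponential_density 1 u * ln u \<partial>lborel"
  let ?q = "\<lambda>h::real. (Gamma (1 + h) - 1) / h"
  have "(Gamma has_field_derivative - euler_mascheroni) (at (1::real))"
    using has_field_derivative_Gamma[of "1::real"] by (simp add: nonpos_Ints_def)
  then have lim: "(?q \<longlongrightarrow> - euler_mascheroni) (at 0)"
    unfolding DERIV_def by simp
  have "?L \<le> - euler_mascheroni"
  proof (rule tendsto_le[OF trivial_limit_at_right_real tendsto_mono[OF at_le lim] tendsto_const])
    show "\<forall>\<^sub>F h in at_right 0. ?L \<le> ?q h"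
      using eventually_at_right_less[of "0::real"]
    proof eventually_elim
      case (elim h)
      then show ?case
        using mult_integral_exponential_density_ln_le[of h] by (simp add: pos_le_divide_eq mult.commute)
    qed
  qed simp
  moreover have "- euler_mascheroni \<le> ?L"
  proof (rule tendsto_le[OF trivial_limit_at_left_real tendsto_const tendsto_mono[OF at_le lim]])
    have "\<forall>\<^sub>F h in at_left 0. h \<in> {-1<..<0::real}"
      by (rule eventually_at_left_real) simp
    then show "\<forall>\<^sub>F h in at_left 0. ?q h \<le> ?L"
    proof eventually_elim
      case (elim h)
      then show ?case
        using mult_integral_exponential_density_ln_le[of h] by (simp add: neg_divide_le_eq mult.commute)
    qed
  qed simp
  ultimately show ?thesis by simp
qed

definition std_exponential :: "real measure" where
  "std_exponential = density lborel (exponential_density 1)"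

lemma prob_space_std_exponential: "prob_space std_exponential"
  unfolding std_exponential_def by (rule prob_space_exponential_density) simp

lemma sets_std_exponential [simp, measurable_cong]: "sets std_exponential = sets borel"
  by (simp add: std_exponential_def)

lemma space_std_exponential [simp]: "space std_exponential = UNIV"
  by (simp add: std_exponential_def)

lemma measure_std_exponential_greaterThan:
  assumes "a \<ge> 0"
  shows "measure std_exponential {a<..} = exp (- a)"
proof -
  interpret prob_space std_exponential by (rule prob_space_std_exponential)
  have "distributed std_exponential lborel (\<lambda>x. x) (exponential_density 1)"
    by (auto simp: distributed_def std_exponential_def distr_id2)
  then have "\<P>(x in std_exponential. a < x) = exp (- a * 1)"
    by (rule exponential_distributedD_gt[OF _ assms]) simp
  then show ?thesis
    by (simp add: greaterThan_def)
qed

lemma AE_std_exponential_pos: "AE u in std_exponential. 0 < u \<and> u \<noteq> a"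
proof -
  have "AE u in lborel. u \<noteq> 0 \<and> u \<noteq> a"
    using AE_lborel_singleton[of 0] AE_lborel_singleton[of a] by eventually_elim simp
  then have "AE u in lborel. 0 < exponential_density 1 u \<longrightarrow> 0 < u \<and> u \<noteq> a"
    by eventually_elim (auto simp: exponential_density_def)
  then show ?thesis
    unfolding std_exponential_def by (subst AE_density) auto
qed

lemma gumbel_eq_distr_std_exponential:
  "gumbel = distr std_exponential borel (\<lambda>u. - ln u - euler_mascheroni)"
proof -
  interpret prob_space std_exponential by (rule prob_space_std_exponential)
  let ?D = "distr std_exponential borel (\<lambda>u. - ln u - euler_mascheroni)"
  have "cdf ?D t = gumbel_cdf t" for t
  proof -
    define a where "a = exp (- (t + euler_mascheroni))"
    have a: "a > 0" by (simp add: a_def)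
    have "cdf ?D t = measure std_exponential {u. - ln u - euler_mascheroni \<le> t}"
      unfolding cdf_def by (subst measure_distr) (auto simp: vimage_def)
    also have "\<dots> = measure std_exponential {a<..}"
    proof (rule measure_eq_AE)
      show "AE u in std_exponential. (u \<in> {u. - ln u - euler_mascheroni \<le> t}) = (u \<in> {a<..})"
        using AE_std_exponential_pos[of a]
      proof eventually_elim
        case (elim u)
        then have "- ln u - euler_mascheroni \<le> t \<longleftrightarrow> ln a \<le> ln u"
          by (auto simp: a_def)
        also have "\<dots> \<longleftrightarrow> a \<le> u" using elim a by simp
        finally show ?case using elim by auto
      qed
    qed auto
    also have "\<dots> = gumbel_cdf t"
      using a by (simp add: measure_std_exponential_greaterThan a_def gumbel_cdf_def)
    finally show ?thesis .
  qed
  then show ?thesis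
    using cdf_unique[OF real_distribution_gumbel real_distribution_distr] cdf_gumbel
    by (simp add: fun_eq_iff)
qed

lemma integrable_gumbel: "integrable gumbel (\<lambda>x. x)"
  and integral_gumbel: "(\<integral>x. x \<partial>gumbel) = 0"
proof -
  interpret prob_space std_exponential by (rule prob_space_std_exponential)
  have ln: "integrable std_exponential ln"
    unfolding std_exponential_def
    by (subst integrable_density) (auto simp: exponential_density_nonneg integrable_exponential_density_ln)
  then show "integrable gumbel (\<lambda>x. x)"
    unfolding gumbel_eq_distr_std_exponential by (subst integrable_distr_eq) auto
  have "(\<integral>u. ln u \<partial>std_exponential) = - euler_mascheroni"
    unfolding std_exponential_def
    by (subst integral_density) (auto simp: exponential_density_nonneg integral_exponential_density_ln)
  then show "(\<integral>x. x \<partial>gumbel) = 0"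
    unfolding gumbel_eq_distr_std_exponential using ln prob_space
    by (subst integral_distr) auto
qed

section \<open>Maxima of Gumbel-perturbed values\<close>

abbreviation gumbels :: "'i set \<Rightarrow> ('i \<Rightarrow> real) measure" where
  "gumbels I \<equiv> PiM I (\<lambda>_. gumbel)"

lemma prob_space_gumbels: "prob_space (gumbels I)"
  by (rule prob_space_PiM) (rule prob_space_gumbel)

lemma measurable_gumbels_component:
  "i \<in> I \<Longrightarrow> (\<lambda>\<omega>. \<omega> i) \<in> borel_measurable (gumbels I)"
  using measurable_component_singleton[of i I "\<lambda>_. gumbel"] by (simp add: measurable_def)

lemma distr_gumbels_component: "i \<in> I \<Longrightarrow> distr (gumbels I) gumbel (\<lambda>\<omega>. \<omega> i) = gumbel"
  by (rule distr_PiM_component) (auto intro: prob_space_gumbel)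

lemma integrable_gumbels_component:
  assumes "i \<in> I"
  shows "integrable (gumbels I) (\<lambda>\<omega>. \<omega> i)"
proof -
  have "integrable (distr (gumbels I) gumbel (\<lambda>\<omega>. \<omega> i)) (\<lambda>x. x)"
    using assms integrable_gumbel by (simp add: distr_gumbels_component)
  then show ?thesis
    using assms by (subst (asm) integrable_distr_eq) (auto simp: measurable_ident_sets)
qed

lemma indep_var_gumbels_restrict:
  assumes "K \<inter> J = {}" "K \<subseteq> I" "J \<subseteq> I" "I \<noteq> {}"
  shows "prob_space.indep_var (gumbels I) (gumbels K) (\<lambda>\<omega>. restrict \<omega> K) (gumbels J) (\<lambda>\<omega>. restrict \<omega> J)"
proof -
  interpret prob_space "gumbels I" by (rule prob_space_gumbels)
  have rv: "(\<lambda>\<omega>. \<omega> i) \<in> measurable (gumbels I) gumbel" for i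
  proof (cases "i \<in> I")
    case False
    then have "(\<lambda>\<omega>. \<omega> i) \<in> measurable (gumbels I) gumbel \<longleftrightarrow> (\<lambda>_. undefined) \<in> measurable (gumbels I) gumbel"
      by (intro measurable_cong) (auto simp: space_PiM PiE_def extensional_def)
    then show ?thesis by simp
  qed (rule measurable_component_singleton)
  have "distr (gumbels I) (gumbels I) (\<lambda>\<omega>. \<lambda>i\<in>I. \<omega> i) = distr (gumbels I) (gumbels I) (\<lambda>\<omega>. \<omega>)"
    by (rule distr_cong) (auto simp: space_PiM)
  also have "\<dots> = gumbels I"
    by simp
  also have "\<dots> = (\<Pi>\<^sub>M i\<in>I. distr (gumbels I) gumbel (\<lambda>\<omega>. \<omega> i))"
    by (rule PiM_cong) (auto simp: distr_gumbels_component)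
  finally have "indep_vars (\<lambda>_. gumbel) (\<lambda>i \<omega>. \<omega> i) I"
    using rv assms(4) by (subst indep_vars_iff_distr_eq_PiM) auto
  from indep_var_restrict[OF this assms(1-3)] show ?thesis
    by simp
qed

lemma integrable_Max:
  fixes f :: "'b \<Rightarrow> 'a \<Rightarrow> real"
  assumes "finite S" "S \<noteq> {}" "\<And>v. v \<in> S \<Longrightarrow> integrable M (f v)"
  shows "integrable M (\<lambda>x. Max ((\<lambda>v. f v x) ` S))"
  using assms
proof (induction S rule: finite_ne_induct)
  case (insert v S)
  then have "integrable M (\<lambda>x. max (f v x) (Max ((\<lambda>v. f v x) ` S)))"
    by (intro integrable_max) auto
  with insert show ?case by simp
qed simp

lemma gumbel_cdf_diff: "gumbel_cdf (t - b) = exp (- exp (- (t + euler_mascheroni)) * exp b)"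
  by (simp add: gumbel_cdf_def exp_add[symmetric] algebra_simps)

lemma prod_gumbel_cdf:
  assumes "finite S" "S \<noteq> {}"
  shows "(\<Prod>v\<in>S. gumbel_cdf (t - a v)) = gumbel_cdf (t - ln (\<Sum>v\<in>S. exp (a v)))"
proof -
  let ?e = "exp (- (t + euler_mascheroni))"
  have pos: "(\<Sum>v\<in>S. exp (a v)) > 0"
    using assms by (intro sum_pos) auto
  have "(\<Prod>v\<in>S. gumbel_cdf (t - a v)) = exp (\<Sum>v\<in>S. - ?e * exp (a v))"
    using assms(1) by (simp add: gumbel_cdf_diff exp_sum)
  also have "(\<Sum>v\<in>S. - ?e * exp (a v)) = - ?e * exp (ln (\<Sum>v\<in>S. exp (a v)))"
    using pos by (simp add: sum_distrib_left)
  finally show ?thesis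
    by (simp only: gumbel_cdf_diff)
qed

lemma borel_measurable_gumbels_Max:
  assumes "finite S" "c ` S \<subseteq> I"
  shows "(\<lambda>\<omega>. Max ((\<lambda>v. \<omega> (c v) + a v) ` S)) \<in> borel_measurable (gumbels I)"
  using assms by (intro borel_measurable_Max borel_measurable_add measurable_gumbels_component) auto

lemma vimage_gumbels_Max_atMost:
  fixes c :: "'b \<Rightarrow> 'i" and a :: "'b \<Rightarrow> real" and t :: real
  assumes "finite S" "S \<noteq> {}" "inj_on c S" "c ` S \<subseteq> I"
  defines "A \<equiv> \<lambda>i. if i \<in> c ` S then {..t - a (the_inv_into S c i)} else UNIV"
  shows "(\<lambda>\<omega>. Max ((\<lambda>v. \<omega> (c v) + a v) ` S)) -` {..t} \<inter> space (gumbels I) = PiE I A"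
proof (intro set_eqI)
  fix \<omega>
  have A_c: "A (c v) = {..t - a v}" if "v \<in> S" for v
    using assms(3) that by (simp add: A_def the_inv_into_f_f)
  have "Max ((\<lambda>v. \<omega> (c v) + a v) ` S) \<le> t \<longleftrightarrow> (\<forall>v\<in>S. \<omega> (c v) \<in> A (c v))"
    using assms(1,2) by (simp add: Max_le_iff A_c le_diff_eq)
  also have "\<dots> \<longleftrightarrow> (\<forall>i\<in>I. \<omega> i \<in> A i)"
  proof
    assume H: "\<forall>v\<in>S. \<omega> (c v) \<in> A (c v)"
    show "\<forall>i\<in>I. \<omega> i \<in> A i"
    proof
      fix i
      show "\<omega> i \<in> A i"
      proof (cases "i \<in> c ` S")
        case True
        with H show ?thesis by blast
      qed (simp add: A_def)
    qed
  qed (use assms(4) in blast)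
  finally show "\<omega> \<in> (\<lambda>\<omega>. Max ((\<lambda>v. \<omega> (c v) + a v) ` S)) -` {..t} \<inter> space (gumbels I) \<longleftrightarrow> \<omega> \<in> PiE I A"
    by (simp add: space_PiM PiE_iff)
qed

lemma cdf_distr_gumbels_Max:
  fixes c :: "'b \<Rightarrow> 'i" and a :: "'b \<Rightarrow> real"
  assumes "finite I" "finite S" "S \<noteq> {}" "inj_on c S" "c ` S \<subseteq> I"
  shows "cdf (distr (gumbels I) borel (\<lambda>\<omega>. Max ((\<lambda>v. \<omega> (c v) + a v) ` S))) t
       = gumbel_cdf (t - ln (\<Sum>v\<in>S. exp (a v)))"
proof -
  interpret G: prob_space gumbel by (rule prob_space_gumbel)
  interpret FP: finite_product_prob_space "\<lambda>_. gumbel" I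
    by unfold_locales (auto simp: assms(1))
  define A where "A = (\<lambda>i. if i \<in> c ` S then {..t - a (the_inv_into S c i)} else UNIV)"
  have A_c: "A (c v) = {..t - a v}" if "v \<in> S" for v
    using assms(4) that by (simp add: A_def the_inv_into_f_f)
  have "cdf (distr (gumbels I) borel (\<lambda>\<omega>. Max ((\<lambda>v. \<omega> (c v) + a v) ` S))) t
      = measure (gumbels I) ((\<lambda>\<omega>. Max ((\<lambda>v. \<omega> (c v) + a v) ` S)) -` {..t} \<inter> space (gumbels I))"
    unfolding cdf_def by (rule measure_distr[OF borel_measurable_gumbels_Max[OF assms(2,5)]]) simp
  also have "\<dots> = measure (gumbels I) (PiE I A)"
    unfolding A_def by (subst vimage_gumbels_Max_atMost[OF assms(2-5)]) (rule refl)
  also have "\<dots> = (\<Prod>i\<in>I. measure gumbel (A i))"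
    by (rule FP.finite_measure_PiM_emb) (auto simp: A_def)
  also have "\<dots> = (\<Prod>i\<in>c ` S. measure gumbel (A i))"
    using assms(1,5) G.prob_space by (intro prod.mono_neutral_right) (auto simp: A_def)
  also have "\<dots> = (\<Prod>v\<in>S. gumbel_cdf (t - a v))"
    using assms(4) by (simp add: prod.reindex A_c measure_gumbel_atMost)
  also have "\<dots> = gumbel_cdf (t - ln (\<Sum>v\<in>S. exp (a v)))"
    using assms(2,3) by (rule prod_gumbel_cdf)
  finally show ?thesis .
qed

lemma distr_gumbels_Max:
  fixes c :: "'b \<Rightarrow> 'i" and a :: "'b \<Rightarrow> real"
  assumes "finite I" "finite S" "S \<noteq> {}" "inj_on c S" "c ` S \<subseteq> I"
  shows "distr (gumbels I) borel (\<lambda>\<omega>. Max ((\<lambda>v. \<omega> (c v) + a v) ` S))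
       = distr gumbel borel (\<lambda>x. x + ln (\<Sum>v\<in>S. exp (a v)))"
proof -
  interpret P: prob_space "gumbels I" by (rule prob_space_gumbels)
  interpret G: prob_space gumbel by (rule prob_space_gumbel)
  let ?L = "ln (\<Sum>v\<in>S. exp (a v))"
  have cdf_shift: "cdf (distr gumbel borel (\<lambda>x. x + ?L)) t = gumbel_cdf (t - ?L)" for t
  proof -
    have "cdf (distr gumbel borel (\<lambda>x. x + ?L)) t = measure gumbel ((\<lambda>x. x + ?L) -` {..t} \<inter> space gumbel)"
      unfolding cdf_def by (subst measure_distr) auto
    also have "(\<lambda>x. x + ?L) -` {..t} \<inter> space gumbel = {..t - ?L}"
      by auto
    finally show ?thesis
      by (simp add: measure_gumbel_atMost)
  qed
  have "real_distribution (distr (gumbels I) borel (\<lambda>\<omega>. Max ((\<lambda>v. \<omega> (c v) + a v) ` S)))"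
    using borel_measurable_gumbels_Max[OF assms(2,5)] by (rule P.real_distribution_distr)
  moreover have "real_distribution (distr gumbel borel (\<lambda>x. x + ?L))"
    by (rule G.real_distribution_distr) simp
  ultimately show ?thesis
    by (rule cdf_unique) (simp add: fun_eq_iff cdf_distr_gumbels_Max[OF assms] cdf_shift)
qed

lemma integral_gumbels_Max:
  fixes c :: "'b \<Rightarrow> 'i" and a :: "'b \<Rightarrow> real"
  assumes "finite I" "finite S" "S \<noteq> {}" "inj_on c S" "c ` S \<subseteq> I"
  shows "(\<integral>\<omega>. Max ((\<lambda>v. \<omega> (c v) + a v) ` S) \<partial>gumbels I) = ln (\<Sum>v\<in>S. exp (a v))"
proof -
  interpret prob_space gumbel by (rule prob_space_gumbel)
  have "(\<integral>\<omega>. Max ((\<lambda>v. \<omega> (c v) + a v) ` S) \<partial>gumbels I)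
      = (\<integral>x. x \<partial>distr (gumbels I) borel (\<lambda>\<omega>. Max ((\<lambda>v. \<omega> (c v) + a v) ` S)))"
    using borel_measurable_gumbels_Max[OF assms(2,5)] by (subst integral_distr) auto
  also have "\<dots> = (\<integral>x. x + ln (\<Sum>v\<in>S. exp (a v)) \<partial>gumbel)"
    by (simp add: distr_gumbels_Max[OF assms] integral_distr)
  also have "\<dots> = ln (\<Sum>v\<in>S. exp (a v))"
    using integrable_gumbel integral_gumbel prob_space by simp
  finally show ?thesis .
qed


text \<open>A measurable selection of the maximum as a convex combination; ties share the weight.\<close>

definition argmax_weight :: "('b \<Rightarrow> real) \<Rightarrow> 'b set \<Rightarrow> 'b \<Rightarrow> real" where
  "argmax_weight f S v = of_bool (f v = Max (f ` S)) / (\<Sum>u\<in>S. of_bool (f u = Max (f ` S)))"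

lemma argmax_weight_nonneg: "0 \<le> argmax_weight f S v"
  by (simp add: argmax_weight_def sum_nonneg)

lemma sum_argmax_weight:
  assumes "finite S" "S \<noteq> {}"
  shows "(\<Sum>v\<in>S. argmax_weight f S v) = 1"
proof -
  have "Max (f ` S) \<in> f ` S"
    using assms by (intro Max_in) auto
  then obtain u where "u \<in> S" "f u = Max (f ` S)"
    by auto
  then have "0 < (\<Sum>u\<in>S. of_bool (f u = Max (f ` S)) :: real)"
    using assms(1) by (intro sum_pos2[where i=u]) auto
  then show ?thesis
    by (simp add: argmax_weight_def sum_divide_distrib[symmetric])
qed

lemma argmax_weight_le_1:
  assumes "finite S" "v \<in> S"
  shows "argmax_weight f S v \<le> 1"
proof -
  have "argmax_weight f S v \<le> (\<Sum>u\<in>S. argmax_weight f S u)"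
    using assms by (intro member_le_sum argmax_weight_nonneg)
  also have "\<dots> = 1"
    using assms by (intro sum_argmax_weight) auto
  finally show ?thesis .
qed

lemma argmax_weight_mult: "argmax_weight f S v * f v = argmax_weight f S v * Max (f ` S)"
  by (simp add: argmax_weight_def)

lemma argmax_weight_cong:
  "(\<And>u. u \<in> S \<Longrightarrow> f u = g u) \<Longrightarrow> v \<in> S \<Longrightarrow> argmax_weight f S v = argmax_weight g S v"
  by (simp add: argmax_weight_def cong: image_cong sum.cong)

lemma borel_measurable_argmax_weight:
  assumes "finite S" "\<And>u. u \<in> S \<Longrightarrow> F u \<in> borel_measurable M" "v \<in> S"
  shows "(\<lambda>x. argmax_weight (\<lambda>u. F u x) S v) \<in> borel_measurable M"
proof -
  have Max: "(\<lambda>x. Max ((\<lambda>u. F u x) ` S)) \<in> borel_measurable M"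
    using assms(1,2) by (rule borel_measurable_Max)
  have indicator: "(\<lambda>x. of_bool (F u x = Max ((\<lambda>u. F u x) ` S)) :: real) \<in> borel_measurable M"
    if "u \<in> S" for u
    using assms(2)[OF that] Max by measurable
  have "(\<lambda>x. \<Sum>u\<in>S. of_bool (F u x = Max ((\<lambda>u. F u x) ` S)) :: real) \<in> borel_measurable M"
    by (rule borel_measurable_sum) (rule indicator)
  then show ?thesis
    unfolding argmax_weight_def by (rule borel_measurable_divide[OF indicator[OF assms(3)]])
qed

lemma sum_weighted_le_Max:
  fixes g :: "'b \<Rightarrow> real"
  assumes "finite S" "\<And>v. v \<in> S \<Longrightarrow> 0 \<le> w v" "(\<Sum>v\<in>S. w v) = 1"
  shows "(\<Sum>v\<in>S. w v * g v) \<le> Max (g ` S)"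
proof -
  have "(\<Sum>v\<in>S. w v * g v) \<le> (\<Sum>v\<in>S. w v * Max (g ` S))"
    using assms(1,2) by (intro sum_mono mult_left_mono Max_ge) auto
  also have "\<dots> = Max (g ` S)"
    using assms(3) by (simp add: sum_distrib_right[symmetric])
  finally show ?thesis .
qed

lemma Max_add_argmax_weight_le:
  fixes g a \<phi> :: "'b \<Rightarrow> real"
  assumes "finite S" "S \<noteq> {}"
  shows "Max ((\<lambda>v. g v + a v) ` S) + (\<Sum>v\<in>S. argmax_weight (\<lambda>u. g u + a u) S v * (\<phi> v - a v))
       \<le> Max ((\<lambda>v. g v + \<phi> v) ` S)"
proof -
  let ?w = "argmax_weight (\<lambda>u. g u + a u) S"
  have "(\<Sum>v\<in>S. ?w v * (g v + a v)) = (\<Sum>v\<in>S. ?w v) * Max ((\<lambda>v. g v + a v) ` S)"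
    unfolding sum_distrib_right by (intro sum.cong refl argmax_weight_mult[of "\<lambda>u. g u + a u"])
  then have Max_eq: "Max ((\<lambda>v. g v + a v) ` S) = (\<Sum>v\<in>S. ?w v * (g v + a v))"
    using sum_argmax_weight[OF assms] by simp
  have "Max ((\<lambda>v. g v + a v) ` S) + (\<Sum>v\<in>S. ?w v * (\<phi> v - a v)) = (\<Sum>v\<in>S. ?w v * (g v + \<phi> v))"
    unfolding Max_eq sum.distrib[symmetric] by (intro sum.cong refl) (simp add: algebra_simps)
  also have "\<dots> \<le> Max ((\<lambda>v. g v + \<phi> v) ` S)"
    using assms sum_argmax_weight[OF assms] by (intro sum_weighted_le_Max) (auto simp: argmax_weight_nonneg)
  finally show ?thesis .
qed

text \<open>With \<open>w v = argmax_weight\<close>, a function of \<open>G\<close> alone, independence turns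
  \<open>E[w v * \<Phi> v]\<close> into \<open>E[w v] * E[\<Phi> v]\<close>.\<close>

lemma (in prob_space) integral_Max_expectation_le:
  fixes G \<Phi> :: "'b \<Rightarrow> 'a \<Rightarrow> real"
  assumes S: "finite S" "S \<noteq> {}"
    and int_G: "\<And>v. v \<in> S \<Longrightarrow> integrable M (G v)"
    and int_\<Phi>: "\<And>v. v \<in> S \<Longrightarrow> integrable M (\<Phi> v)"
    and indep: "indep_var (PiM S (\<lambda>_. borel)) (\<lambda>x. \<lambda>u\<in>S. G u x) (PiM S (\<lambda>_. borel)) (\<lambda>x. \<lambda>u\<in>S. \<Phi> u x)"
  shows "(\<integral>x. Max ((\<lambda>v. G v x + expectation (\<Phi> v)) ` S) \<partial>M) \<le> (\<integral>x. Max ((\<lambda>v. G v x + \<Phi> v x) ` S) \<partial>M)"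
proof -
  define a where "a v = expectation (\<Phi> v)" for v
  define w where "w v x = argmax_weight (\<lambda>u. G u x + a u) S v" for v x
  have w_meas: "w v \<in> borel_measurable M" if "v \<in> S" for v
    unfolding w_def using S(1) int_G that by (intro borel_measurable_argmax_weight) auto
  have w_int: "integrable M (w v)" if "v \<in> S" for v
  proof (rule integrable_const_bound[where B=1])
    show "AE x in M. norm (w v x) \<le> 1"
      using argmax_weight_le_1[OF S(1) that] by (simp add: w_def abs_of_nonneg argmax_weight_nonneg)
  qed (rule w_meas[OF that])
  have w_indep: "indep_var borel (w v) borel (\<Phi> v)" if v: "v \<in> S" for v
  proof -
    have "(\<lambda>g. argmax_weight (\<lambda>u. g u + a u) S v) \<in> borel_measurable (PiM S (\<lambda>_. borel))"
      using S(1) v by (intro borel_measurable_argmax_weight) auto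
    moreover have "(\<lambda>\<phi>. \<phi> v) \<in> borel_measurable (PiM S (\<lambda>_. borel))"
      using v by measurable
    ultimately have "indep_var borel ((\<lambda>g. argmax_weight (\<lambda>u. g u + a u) S v) \<circ> (\<lambda>x. \<lambda>u\<in>S. G u x))
        borel ((\<lambda>\<phi>. \<phi> v) \<circ> (\<lambda>x. \<lambda>u\<in>S. \<Phi> u x))"
      by (rule indep_var_compose[OF indep])
    moreover have "(\<lambda>g. argmax_weight (\<lambda>u. g u + a u) S v) \<circ> (\<lambda>x. \<lambda>u\<in>S. G u x) = w v"
      using v by (auto simp: w_def fun_eq_iff intro!: argmax_weight_cong)
    moreover have "(\<lambda>\<phi>. \<phi> v) \<circ> (\<lambda>x. \<lambda>u\<in>S. \<Phi> u x) = \<Phi> v"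
      using v by (simp add: fun_eq_iff)
    ultimately show ?thesis
      by simp
  qed
  have w_\<Phi>: "integrable M (\<lambda>x. w v x * \<Phi> v x)" "expectation (\<lambda>x. w v x * \<Phi> v x) = expectation (w v) * a v"
    if "v \<in> S" for v
    using indep_var_integrable[OF w_indep w_int int_\<Phi>] indep_var_lebesgue_integral[OF w_indep w_int int_\<Phi>]
      that by (auto simp: a_def)
  have pointwise: "Max ((\<lambda>v. G v x + a v) ` S) + (\<Sum>v\<in>S. w v x * (\<Phi> v x - a v))
      \<le> Max ((\<lambda>v. G v x + \<Phi> v x) ` S)" for x
    unfolding w_def by (rule Max_add_argmax_weight_le[OF S])
  have int_Max_a: "integrable M (\<lambda>x. Max ((\<lambda>v. G v x + a v) ` S))"
    using S int_G by (intro integrable_Max) auto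
  have int_sum: "integrable M (\<lambda>x. \<Sum>v\<in>S. w v x * (\<Phi> v x - a v))"
    using w_\<Phi>(1) w_int by (auto simp: right_diff_distrib)
  have "(\<integral>x. Max ((\<lambda>v. G v x + a v) ` S) \<partial>M)
      = (\<integral>x. Max ((\<lambda>v. G v x + a v) ` S) + (\<Sum>v\<in>S. w v x * (\<Phi> v x - a v)) \<partial>M)"
    using int_Max_a int_sum w_\<Phi> w_int by (simp add: right_diff_distrib)
  also have "\<dots> \<le> (\<integral>x. Max ((\<lambda>v. G v x + \<Phi> v x) ` S) \<partial>M)"
    using S int_G int_\<Phi> int_Max_a int_sum pointwise
    by (intro integral_mono integrable_Max Bochner_Integration.integrable_add) auto
  finally show ?thesis
    by (simp add: a_def)
qed

lemma ln_sum_exp_integral_le_integral_gumbels_Max: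
  fixes c :: "'b \<Rightarrow> 'i" and \<Phi> :: "'b \<Rightarrow> ('i \<Rightarrow> real) \<Rightarrow> real"
  assumes "finite I" "finite S" "S \<noteq> {}" "inj_on c S" "c ` S \<subseteq> K"
    and KJ: "K \<inter> J = {}" "K \<subseteq> I" "J \<subseteq> I"
    and meas_\<Phi>: "\<And>v. v \<in> S \<Longrightarrow> \<Phi> v \<in> borel_measurable (gumbels J)"
    and int_\<Phi>: "\<And>v. v \<in> S \<Longrightarrow> integrable (gumbels I) (\<lambda>\<omega>. \<Phi> v (restrict \<omega> J))"
  shows "ln (\<Sum>v\<in>S. exp (\<integral>\<omega>. \<Phi> v (restrict \<omega> J) \<partial>gumbels I))
       \<le> (\<integral>\<omega>. Max ((\<lambda>v. \<omega> (c v) + \<Phi> v (restrict \<omega> J)) ` S) \<partial>gumbels I)"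
proof -
  interpret prob_space "gumbels I" by (rule prob_space_gumbels)
  have cK: "v \<in> S \<Longrightarrow> c v \<in> K" for v using assms(5) by auto
  have "I \<noteq> {}" using assms(3) cK KJ(2) by blast
  note indep_KJ = indep_var_gumbels_restrict[OF KJ this]
  have "(\<lambda>r. \<lambda>u\<in>S. r (c u)) \<in> measurable (gumbels K) (PiM S (\<lambda>_. borel))"
    using cK by (intro measurable_restrict) auto
  moreover have "(\<lambda>r. \<lambda>u\<in>S. \<Phi> u r) \<in> measurable (gumbels J) (PiM S (\<lambda>_. borel))"
    using meas_\<Phi> by (intro measurable_restrict) auto
  ultimately have "indep_var (PiM S (\<lambda>_. borel)) ((\<lambda>r. \<lambda>u\<in>S. r (c u)) \<circ> (\<lambda>\<omega>. restrict \<omega> K))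
      (PiM S (\<lambda>_. borel)) ((\<lambda>r. \<lambda>u\<in>S. \<Phi> u r) \<circ> (\<lambda>\<omega>. restrict \<omega> J))"
    by (rule indep_var_compose[OF indep_KJ])
  then have indep: "indep_var (PiM S (\<lambda>_. borel)) (\<lambda>\<omega>. \<lambda>u\<in>S. \<omega> (c u))
      (PiM S (\<lambda>_. borel)) (\<lambda>\<omega>. \<lambda>u\<in>S. \<Phi> u (restrict \<omega> J))"
    using cK by (simp add: comp_def cong: restrict_cong)
  have "ln (\<Sum>v\<in>S. exp (\<integral>\<omega>. \<Phi> v (restrict \<omega> J) \<partial>gumbels I))
      = (\<integral>\<omega>. Max ((\<lambda>v. \<omega> (c v) + (\<integral>\<omega>. \<Phi> v (restrict \<omega> J) \<partial>gumbels I)) ` S) \<partial>gumbels I)"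
    using assms(1-5) KJ(2) by (intro integral_gumbels_Max[symmetric]) auto
  also have "\<dots> \<le> (\<integral>\<omega>. Max ((\<lambda>v. \<omega> (c v) + \<Phi> v (restrict \<omega> J)) ` S) \<partial>gumbels I)"
    using assms(2,3) cK KJ(2) int_\<Phi> indep
    by (intro integral_Max_expectation_le[where G="\<lambda>v \<omega>. \<omega> (c v)" and \<Phi>="\<lambda>v \<omega>. \<Phi> v (restrict \<omega> J)"]
        integrable_gumbels_component) auto
  finally show ?thesis .
qed

section \<open>The sampling procedure\<close>

lemma Max_UN:
  fixes f :: "'b \<Rightarrow> 'c::linorder"
  assumes "finite S" "S \<noteq> {}" "\<And>v. v \<in> S \<Longrightarrow> finite (A v)" "\<And>v. v \<in> S \<Longrightarrow> A v \<noteq> {}"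
  shows "Max (f ` (\<Union>v\<in>S. A v)) = Max ((\<lambda>v. Max (f ` A v)) ` S)"
proof (rule antisym)
  have "f z \<le> Max ((\<lambda>v. Max (f ` A v)) ` S)" if "v \<in> S" "z \<in> A v" for v z
  proof -
    have "f z \<le> Max (f ` A v)"
      using assms that by (intro Max_ge) auto
    also have "\<dots> \<le> Max ((\<lambda>v. Max (f ` A v)) ` S)"
      using assms that by (intro Max_ge) auto
    finally show ?thesis .
  qed
  then show "Max (f ` (\<Union>v\<in>S. A v)) \<le> Max ((\<lambda>v. Max (f ` A v)) ` S)"
    using assms by (auto simp: Max_le_iff)
  show "Max ((\<lambda>v. Max (f ` A v)) ` S) \<le> Max (f ` (\<Union>v\<in>S. A v))"
    using assms by (auto simp: Max_le_iff intro!: Max_ge)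
qed

lemma expo_infinity [simp]: "expo \<infinity> = 0" "expo (-\<infinity>) = 0"
  by (simp_all flip: PInfty_eq_infinity MInfty_eq_minfinity)

lemma expo_nonneg: "0 \<le> expo x"
  by (cases x) auto

definition feasible_completions ::
    "nat \<Rightarrow> (nat \<Rightarrow> 'a set) \<Rightarrow> ((nat \<Rightarrow> 'a) \<Rightarrow> ereal) \<Rightarrow> nat \<Rightarrow> (nat \<Rightarrow> 'a) \<Rightarrow> (nat \<Rightarrow> 'a) set" where
  "feasible_completions n X \<theta> j y = {z \<in> completions n X j y. \<theta> z \<noteq> -\<infinity>}"

definition perturbed_potential ::
    "nat \<Rightarrow> ((nat \<Rightarrow> 'a) \<Rightarrow> ereal) \<Rightarrow> nat \<Rightarrow> (nat \<times> 'a \<Rightarrow> real) \<Rightarrow> (nat \<Rightarrow> 'a) \<Rightarrow> real" where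
  "perturbed_potential n \<theta> j \<gamma> z = real_of_ereal (\<theta> z) + (\<Sum>i\<in>{j..<n}. \<gamma> (i, z i))"

lemma U_eq:
  "U n X \<theta> j y = (if feasible_completions n X \<theta> j y = {} then -\<infinity>
     else ereal (\<integral>\<gamma>. Max (perturbed_potential n \<theta> j \<gamma> ` feasible_completions n X \<theta> j y) \<partial>gumbels (gidx n X)))"
  by (simp add: U_def Let_def feasible_completions_def perturbed_potential_def gumbel_family_def)

lemma U_eq_MInf_iff: "U n X \<theta> j y = -\<infinity> \<longleftrightarrow> feasible_completions n X \<theta> j y = {}"
  by (simp add: U_eq)

lemma expo_U_pos: "U n X \<theta> j y \<noteq> -\<infinity> \<Longrightarrow> 0 < expo (U n X \<theta> j y)"
  by (simp add: U_eq split: if_splits)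

lemma finite_feasible_completions:
  "(\<And>i. i < n \<Longrightarrow> finite (X i)) \<Longrightarrow> finite (feasible_completions n X \<theta> j y)"
  by (rule finite_subset[OF _ finite_PiE[of "{..<n}" X]]) (auto simp: feasible_completions_def completions_def)

lemma feasible_completions_Suc_iff:
  "z \<in> feasible_completions n X \<theta> (Suc j) (y(j := v)) \<longleftrightarrow> z \<in> feasible_completions n X \<theta> j y \<and> z j = v"
  unfolding feasible_completions_def completions_def by (auto simp: less_Suc_eq)

lemma perturbed_potential_Suc:
  "j < n \<Longrightarrow> perturbed_potential n \<theta> j \<gamma> z = \<gamma> (j, z j) + perturbed_potential n \<theta> (Suc j) \<gamma> z"
  by (simp add: perturbed_potential_def sum.atLeast_Suc_lessThan)

lemma perturbed_potential_restrict:
  assumes "z \<in> PiE {..<n} X"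
  shows "perturbed_potential n \<theta> j (restrict \<gamma> {p \<in> gidx n X. j \<le> fst p}) z = perturbed_potential n \<theta> j \<gamma> z"
  unfolding perturbed_potential_def using assms
  by (intro arg_cong2[where f="(+)"] refl sum.cong) (auto simp: gidx_def PiE_def)

lemma borel_measurable_Max_perturbed_potential:
  assumes "finite F" "F \<subseteq> PiE {..<n} X"
  shows "(\<lambda>\<gamma>. Max (perturbed_potential n \<theta> j \<gamma> ` F)) \<in> borel_measurable (gumbels {p \<in> gidx n X. j \<le> fst p})"
  unfolding perturbed_potential_def using assms
  by (intro borel_measurable_Max borel_measurable_add borel_measurable_sum borel_measurable_const
      measurable_gumbels_component) (auto simp: gidx_def PiE_def)

lemma integrable_Max_perturbed_potential:
  assumes "finite F" "F \<noteq> {}" "F \<subseteq> PiE {..<n} X"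
  shows "integrable (gumbels (gidx n X)) (\<lambda>\<gamma>. Max (perturbed_potential n \<theta> j \<gamma> ` F))"
proof -
  interpret prob_space "gumbels (gidx n X)" by (rule prob_space_gumbels)
  show ?thesis
    unfolding perturbed_potential_def using assms
    by (intro integrable_Max Bochner_Integration.integrable_add Bochner_Integration.integrable_sum
        integrable_gumbels_component integrable_const) (auto simp: gidx_def PiE_def)
qed

lemma feasible_completions_eq_UN:
  assumes "j < n"
  shows "feasible_completions n X \<theta> j y = (\<Union>v\<in>{v \<in> X j. feasible_completions n X \<theta> (Suc j) (y(j := v)) \<noteq> {}}.
           feasible_completions n X \<theta> (Suc j) (y(j := v)))"
proof (intro set_eqI iffI)
  fix z
  assume z: "z \<in> feasible_completions n X \<theta> j y"
  then have "z j \<in> X j"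
    using assms by (auto simp: feasible_completions_def completions_def PiE_def)
  with z show "z \<in> (\<Union>v\<in>{v \<in> X j. feasible_completions n X \<theta> (Suc j) (y(j := v)) \<noteq> {}}.
      feasible_completions n X \<theta> (Suc j) (y(j := v)))"
    by (auto simp: feasible_completions_Suc_iff)
qed (auto simp: feasible_completions_Suc_iff)

lemma Max_perturbed_potential_Suc:
  assumes fin: "\<And>i. i < n \<Longrightarrow> finite (X i)" and "j < n"
    and "feasible_completions n X \<theta> j y \<noteq> {}"
  defines "S \<equiv> {v \<in> X j. feasible_completions n X \<theta> (Suc j) (y(j := v)) \<noteq> {}}"
  shows "Max (perturbed_potential n \<theta> j \<gamma> ` feasible_completions n X \<theta> j y)
       = Max ((\<lambda>v. \<gamma> (j, v) + Max (perturbed_potential n \<theta> (Suc j) \<gamma> ` feasible_completions n X \<theta> (Suc j) (y(j := v)))) ` S)"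
proof -
  let ?F = "\<lambda>v. feasible_completions n X \<theta> (Suc j) (y(j := v))"
  note F_j = feasible_completions_eq_UN[OF \<open>j < n\<close>, of X \<theta> y, folded S_def]
  have "S \<noteq> {}" "finite S"
    using assms(3) fin[OF \<open>j < n\<close>] F_j by (auto simp: S_def)
  then have "Max (perturbed_potential n \<theta> j \<gamma> ` feasible_completions n X \<theta> j y)
      = Max ((\<lambda>v. Max (perturbed_potential n \<theta> j \<gamma> ` ?F v)) ` S)"
    unfolding F_j by (intro Max_UN finite_feasible_completions fin) (auto simp: S_def)
  also have "\<dots> = Max ((\<lambda>v. \<gamma> (j, v) + Max (perturbed_potential n \<theta> (Suc j) \<gamma> ` ?F v)) ` S)"
  proof (intro arg_cong[where f=Max] image_cong refl)
    fix v assume v: "v \<in> S"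
    have "perturbed_potential n \<theta> j \<gamma> ` ?F v = (\<lambda>z. perturbed_potential n \<theta> (Suc j) \<gamma> z + \<gamma> (j, v)) ` ?F v"
      using \<open>j < n\<close> by (intro image_cong refl) (simp add: perturbed_potential_Suc feasible_completions_Suc_iff)
    also have "Max \<dots> = Max (perturbed_potential n \<theta> (Suc j) \<gamma> ` ?F v) + \<gamma> (j, v)"
      using v fin by (intro Max_add_commute finite_feasible_completions) (auto simp: S_def)
    finally show "Max (perturbed_potential n \<theta> j \<gamma> ` ?F v)
        = \<gamma> (j, v) + Max (perturbed_potential n \<theta> (Suc j) \<gamma> ` ?F v)"
      by linarith
  qed
  finally show ?thesis .
qed

text \<open>Max-stability for the perturbations of coordinate \<open>j\<close>, Jensen for the deeper ones.\<close>

lemma sum_expo_U_Suc_le: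
  assumes fin: "\<And>i. i < n \<Longrightarrow> finite (X i)" and "j < n"
  shows "(\<Sum>v\<in>X j. expo (U n X \<theta> (Suc j) (y(j := v)))) \<le> expo (U n X \<theta> j y)"
proof (cases "feasible_completions n X \<theta> j y = {}")
  case True
  then have "feasible_completions n X \<theta> (Suc j) (y(j := v)) = {}" for v
    by (auto simp: feasible_completions_Suc_iff)
  then show ?thesis
    by (simp add: U_eq)
next
  case False
  define I where "I = gidx n X"
  define K where "K = {p \<in> I. fst p = j}"
  define J where "J = {p \<in> I. Suc j \<le> fst p}"
  define F where "F v = feasible_completions n X \<theta> (Suc j) (y(j := v))" for v
  define S where "S = {v \<in> X j. F v \<noteq> {}}"
  define \<Phi> where "\<Phi> v \<gamma> = Max (perturbed_potential n \<theta> (Suc j) \<gamma> ` F v)" for v \<gamma>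
  have F_sub: "F v \<subseteq> PiE {..<n} X" "finite (F v)" for v
    using finite_feasible_completions[OF fin]
    by (auto simp: F_def feasible_completions_def completions_def)
  have "finite I"
    using fin by (auto simp: I_def gidx_def intro!: finite_SigmaI)
  have "finite S" "S \<noteq> {}"
    using fin[OF \<open>j < n\<close>] False feasible_completions_eq_UN[OF \<open>j < n\<close>, of X \<theta> y]
    by (auto simp: S_def F_def)
  have \<Phi>_restrict: "\<Phi> v (restrict \<gamma> J) = \<Phi> v \<gamma>" for v \<gamma>
    unfolding \<Phi>_def J_def I_def using F_sub
    by (intro arg_cong[where f=Max] image_cong refl perturbed_potential_restrict) auto
  have \<Phi>_meas: "\<Phi> v \<in> borel_measurable (gumbels J)" for v
    unfolding \<Phi>_def J_def I_def using F_sub(2,1) by (rule borel_measurable_Max_perturbed_potential)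
  have \<Phi>_int: "integrable (gumbels I) (\<lambda>\<gamma>. \<Phi> v (restrict \<gamma> J))" if "v \<in> S" for v
    unfolding \<Phi>_restrict unfolding \<Phi>_def I_def using F_sub that
    by (intro integrable_Max_perturbed_potential) (auto simp: S_def)
  have U_Suc: "U n X \<theta> (Suc j) (y(j := v)) = (if v \<in> S then ereal (\<integral>\<gamma>. \<Phi> v (restrict \<gamma> J) \<partial>gumbels I) else -\<infinity>)"
    if "v \<in> X j" for v
    unfolding \<Phi>_restrict using that by (simp add: U_eq S_def F_def \<Phi>_def I_def)
  have "(\<Sum>v\<in>X j. expo (U n X \<theta> (Suc j) (y(j := v)))) = (\<Sum>v\<in>S. exp (\<integral>\<gamma>. \<Phi> v (restrict \<gamma> J) \<partial>gumbels I))"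
    using fin[OF \<open>j < n\<close>] by (intro sum.mono_neutral_cong_right) (auto simp: U_Suc S_def)
  also have "\<dots> = exp (ln (\<Sum>v\<in>S. exp (\<integral>\<gamma>. \<Phi> v (restrict \<gamma> J) \<partial>gumbels I)))"
    using \<open>finite S\<close> \<open>S \<noteq> {}\<close> by (intro exp_ln[symmetric] sum_pos) auto
  also have "\<dots> \<le> exp (\<integral>\<gamma>. Max ((\<lambda>v. \<gamma> (j, v) + \<Phi> v (restrict \<gamma> J)) ` S) \<partial>gumbels I)"
    unfolding exp_le_cancel_iff
  proof (rule ln_sum_exp_integral_le_integral_gumbels_Max)
    show "inj_on (\<lambda>v. (j, v)) S"
      by (simp add: inj_on_def)
    show "(\<lambda>v. (j, v)) ` S \<subseteq> K" "K \<inter> J = {}" "K \<subseteq> I" "J \<subseteq> I"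
      using \<open>j < n\<close> by (auto simp: K_def J_def I_def gidx_def S_def)
  qed (fact \<open>finite I\<close> \<open>finite S\<close> \<open>S \<noteq> {}\<close> \<Phi>_int | rule \<Phi>_meas)+
  also have "\<dots> = expo (U n X \<theta> j y)"
    unfolding \<Phi>_restrict using False fin \<open>j < n\<close>
    by (simp add: U_eq Max_perturbed_potential_Suc I_def S_def F_def \<Phi>_def)
  finally show ?thesis .
qed

lemma pj_nonneg: "0 \<le> pj n X \<theta> j y v"
  by (simp add: pj_def expo_nonneg)

lemma sum_pj_le_1:
  assumes "\<And>i. i < n \<Longrightarrow> finite (X i)" "j < n"
  shows "(\<Sum>v\<in>X j. pj n X \<theta> j y v) \<le> 1"
proof (cases "U n X \<theta> j y = -\<infinity>")
  case False
  then show ?thesis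
    using sum_expo_U_Suc_le[OF assms] expo_U_pos[OF False]
    by (simp add: pj_def sum_divide_distrib[symmetric])
qed (simp add: pj_def)

lemma pmf_step_pmf:
  assumes "\<And>i. i < n \<Longrightarrow> finite (X i)" "j < n"
  shows "pmf (step_pmf n X \<theta> j y) w = (case w of
       None \<Rightarrow> 1 - (\<Sum>v\<in>X j. pj n X \<theta> j y v)
     | Some v \<Rightarrow> (if v \<in> X j then pj n X \<theta> j y v else 0))"
  unfolding step_pmf_def
proof (rule pmf_embed_pmf)
  let ?f = "\<lambda>w. case w of None \<Rightarrow> 1 - (\<Sum>v\<in>X j. pj n X \<theta> j y v) | Some v \<Rightarrow> (if v \<in> X j then pj n X \<theta> j y v else 0)"
  have "finite (X j)"
    using assms by simp
  show "0 \<le> ?f w" for w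
    using sum_pj_le_1[OF assms, where \<theta>=\<theta> and y=y] by (auto simp: pj_nonneg split: option.split)
  have "(\<integral>\<^sup>+w. ennreal (?f w) \<partial>count_space UNIV) = (\<Sum>w\<in>insert None (Some ` X j). ennreal (?f w))"
    using \<open>finite (X j)\<close> by (intro nn_integral_count_space') (auto split: option.split)
  also have "\<dots> = ennreal (\<Sum>w\<in>insert None (Some ` X j). ?f w)"
    using sum_pj_le_1[OF assms, where \<theta>=\<theta> and y=y] by (intro sum_ennreal) (auto simp: pj_nonneg split: option.split)
  also have "(\<Sum>w\<in>insert None (Some ` X j). ?f w) = 1"
    using \<open>finite (X j)\<close> by (simp add: sum.reindex)
  finally show "(\<integral>\<^sup>+w. ennreal (?f w) \<partial>count_space UNIV) = 1"
    by simp
qed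

lemma pass_from_outcome:
  assumes fin: "\<And>i. i < n \<Longrightarrow> finite (X i)"
  shows "j + k = n \<Longrightarrow> Some z \<in> set_pmf (pass_from n X \<theta> k j y) \<Longrightarrow>
    (\<forall>i. i < j \<or> n \<le> i \<longrightarrow> z i = y i) \<and> (\<forall>i\<in>{j..<n}. z i \<in> X i)"
proof (induction k arbitrary: j y)
  case (Suc k)
  have "j < n"
    using Suc.prems(1) by simp
  from Suc.prems(2) obtain w where w: "w \<in> set_pmf (step_pmf n X \<theta> j y)"
    and z: "Some z \<in> set_pmf (case w of None \<Rightarrow> return_pmf None | Some v \<Rightarrow> pass_from n X \<theta> k (Suc j) (y(j := v)))"
    by auto
  then obtain v where v: "w = Some v"
    by (cases w) auto
  have "v \<in> X j"
    using w v \<open>j < n\<close> by (auto simp: set_pmf_eq pmf_step_pmf[OF fin] split: if_splits)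
  have IH: "(\<forall>i. i < Suc j \<or> n \<le> i \<longrightarrow> z i = (y(j := v)) i) \<and> (\<forall>i\<in>{Suc j..<n}. z i \<in> X i)"
  proof (rule Suc.IH)
    show "Some z \<in> set_pmf (pass_from n X \<theta> k (Suc j) (y(j := v)))"
      using z v by simp
  qed (use Suc.prems(1) in simp)
  show ?case
  proof (intro conjI allI impI ballI)
    fix i
    assume "i < j \<or> n \<le> i"
    then show "z i = y i"
      using IH \<open>j < n\<close> by auto
  next
    fix i
    assume "i \<in> {j..<n}"
    then show "z i \<in> X i"
      using IH \<open>v \<in> X j\<close> by (cases "i = j") auto
  qed
qed simp

lemma expo_U_complete:
  assumes "x \<in> PiE {..<n} X" "\<theta> x \<noteq> \<infinity>"
  shows "expo (U n X \<theta> n x) = expo (\<theta> x)"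
proof -
  interpret prob_space "gumbels (gidx n X)" by (rule prob_space_gumbels)
  have "completions n X n x = {x}"
    using assms(1) by (auto simp: completions_def intro: PiE_ext)
  then show ?thesis
    using assms(2) by (cases "\<theta> x") (auto simp: U_eq feasible_completions_def perturbed_potential_def prob_space)
qed

lemma pmf_pass_from_Suc_Some:
  assumes fin: "\<And>i. i < n \<Longrightarrow> finite (X i)" and "j + Suc k = n" "x j \<in> X j"
  shows "pmf (pass_from n X \<theta> (Suc k) j y) (Some x)
       = pj n X \<theta> j y (x j) * pmf (pass_from n X \<theta> k (Suc j) (y(j := x j))) (Some x)"
proof -
  have "j < n"
    using assms(2) by simp
  let ?next = "\<lambda>w. case w of None \<Rightarrow> return_pmf None | Some v \<Rightarrow> pass_from n X \<theta> k (Suc j) (y(j := v))"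
  have other: "pmf (?next w) (Some x) = 0" if "w \<noteq> Some (x j)" for w
  proof (cases w)
    case (Some v)
    have "Some x \<notin> set_pmf (pass_from n X \<theta> k (Suc j) (y(j := v)))"
      using pass_from_outcome[OF fin, where j="Suc j" and k=k and z=x and \<theta>=\<theta> and y="y(j := v)"]
        assms(2) that Some by auto
    then show ?thesis
      by (simp add: Some set_pmf_eq)
  qed simp
  have "pmf (pass_from n X \<theta> (Suc k) j y) (Some x)
      = (\<integral>w. pmf (?next w) (Some x) \<partial>measure_pmf (step_pmf n X \<theta> j y))"
    by (simp add: pmf_bind)
  also have "\<dots> = (\<Sum>w\<in>{Some (x j)}. pmf (step_pmf n X \<theta> j y) w *\<^sub>R pmf (?next w) (Some x))"
    by (rule integral_measure_pmf) (use other in auto)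
  also have "\<dots> = pj n X \<theta> j y (x j) * pmf (pass_from n X \<theta> k (Suc j) (y(j := x j))) (Some x)"
    using \<open>x j \<in> X j\<close> by (simp add: pmf_step_pmf[OF fin \<open>j < n\<close>])
  finally show ?thesis .
qed

text \<open>Each step multiplies the probability of reaching \<open>x\<close> by \<open>pj\<close>, a ratio of consecutive
  values of \<open>expo \<circ> U\<close>; the product telescopes.\<close>

lemma pmf_pass_from_Some:
  assumes fin: "\<And>i. i < n \<Longrightarrow> finite (X i)"
    and not_inf: "\<And>x. x \<in> PiE {..<n} X \<Longrightarrow> \<theta> x \<noteq> \<infinity>"
  shows "j + k = n \<Longrightarrow> x \<in> completions n X j y \<Longrightarrow> (\<forall>i\<ge>n. y i = undefined) \<Longrightarrow>
    pmf (pass_from n X \<theta> k j y) (Some x) * expo (U n X \<theta> j y) = expo (\<theta> x)"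
proof (induction k arbitrary: j y)
  case 0
  have "x i = y i" for i
    using 0 by (cases "i < n") (auto simp: completions_def PiE_def extensional_def)
  then have "x = y"
    by (rule ext)
  then show ?case
    using 0 expo_U_complete[of x n X \<theta>] not_inf by (simp add: completions_def)
next
  case (Suc k)
  have "x j \<in> X j"
    using Suc.prems(1,2) by (auto simp: completions_def PiE_def)
  note step = pmf_pass_from_Suc_Some[where n=n and X=X and x=x and j=j, OF fin Suc.prems(1) this]
  have IH: "pmf (pass_from n X \<theta> k (Suc j) (y(j := x j))) (Some x) * expo (U n X \<theta> (Suc j) (y(j := x j)))
      = expo (\<theta> x)"
    using Suc.prems by (intro Suc.IH) (auto simp: completions_def less_Suc_eq)
  show ?case
  proof (cases "U n X \<theta> j y = -\<infinity>")
    case True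
    then have "\<theta> x = -\<infinity>"
      using Suc.prems(2) by (auto simp: U_eq_MInf_iff feasible_completions_def)
    with True show ?thesis
      by simp
  next
    case False
    then have "0 < expo (U n X \<theta> j y)"
      by (rule expo_U_pos)
    with step IH show ?thesis
      by (simp add: pj_def field_simps)
  qed
qed

lemma measure_pmf_Some_div_range_Some:
  fixes p :: "'b option pmf"
  assumes "finite A" "set_pmf p \<subseteq> insert None (Some ` A)" "c \<noteq> 0"
    and "\<And>x. x \<in> A \<Longrightarrow> pmf p (Some x) = f x / c" and "x \<in> A"
  shows "measure_pmf.prob p {Some x} / measure_pmf.prob p (range Some) = f x / (\<Sum>x'\<in>A. f x')"
proof -
  have "measure_pmf.prob p (range Some) = measure_pmf.prob p (Some ` A)"
    using assms(2) by (intro measure_pmf.finite_measure_eq_AE AE_pmfI) auto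
  also have "\<dots> = (\<Sum>x'\<in>A. f x') / c"
    using assms(1,4) by (simp add: measure_measure_pmf_finite sum.reindex sum_divide_distrib)
  finally show ?thesis
    using assms(3-5) by (simp add: measure_pmf_single)
qed

lemma set_pmf_pass:
  assumes "\<And>i. i < n \<Longrightarrow> finite (X i)"
  shows "set_pmf (pass n X \<theta>) \<subseteq> insert None (Some ` PiE {..<n} X)"
proof
  fix w
  assume w: "w \<in> set_pmf (pass n X \<theta>)"
  show "w \<in> insert None (Some ` PiE {..<n} X)"
  proof (cases w)
    case (Some z)
    with w have "(\<forall>i. n \<le> i \<longrightarrow> z i = undefined) \<and> (\<forall>i\<in>{0..<n}. z i \<in> X i)"
      using pass_from_outcome[where n=n and X=X and \<theta>=\<theta> and j=0 and k=n and y="\<lambda>_. undefined", OF assms] by (simp add: pass_def)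
    then have "z \<in> PiE {..<n} X"
      by (auto simp: PiE_iff extensional_def)
    with Some show ?thesis
      by simp
  qed simp
qed

lemma pmf_pass_Some:
  assumes "\<And>i. i < n \<Longrightarrow> finite (X i)" "\<And>x. x \<in> PiE {..<n} X \<Longrightarrow> \<theta> x \<noteq> \<infinity>"
    and "x \<in> PiE {..<n} X"
  shows "pmf (pass n X \<theta>) (Some x) * expo (U n X \<theta> 0 (\<lambda>_. undefined)) = expo (\<theta> x)"
proof -
  have "pmf (pass_from n X \<theta> n 0 (\<lambda>_. undefined)) (Some x) * expo (U n X \<theta> 0 (\<lambda>_. undefined)) = expo (\<theta> x)"
    by (rule pmf_pass_from_Some[OF assms(1,2)]) (use assms(3) in \<open>simp_all add: completions_def\<close>)
  then show ?thesis
    by (simp add: pass_def)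
qed

lemma U_0_neq_MInf:
  assumes "(\<Sum>x\<in>PiE {..<n} X. expo (\<theta> x)) > 0"
  shows "U n X \<theta> 0 y \<noteq> -\<infinity>"
proof -
  have "\<exists>x\<in>PiE {..<n} X. expo (\<theta> x) \<noteq> 0"
  proof (rule ccontr)
    assume "\<not> (\<exists>x\<in>PiE {..<n} X. expo (\<theta> x) \<noteq> 0)"
    then have "(\<Sum>x\<in>PiE {..<n} X. expo (\<theta> x)) = 0"
      by (intro sum.neutral) simp
    with assms show False
      by simp
  qed
  then obtain x where "x \<in> PiE {..<n} X" "expo (\<theta> x) \<noteq> 0"
    by blast
  moreover from this(2) have "\<theta> x \<noteq> -\<infinity>"
    by auto
  ultimately have "x \<in> feasible_completions n X \<theta> 0 y"
    by (simp add: feasible_completions_def completions_def)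
  then show ?thesis
    unfolding U_eq_MInf_iff by blast
qed

theorem theorem3:
  fixes n :: nat and X :: "nat \<Rightarrow> 'a set" and \<theta> :: "(nat \<Rightarrow> 'a) \<Rightarrow> ereal"
  assumes fin: "\<And>i. i < n \<Longrightarrow> finite (X i)"
    and not_inf: "\<And>x. x \<in> PiE {..<n} X \<Longrightarrow> \<theta> x \<noteq> \<infinity>"
    and Zpos: "(\<Sum>x\<in>PiE {..<n} X. expo (\<theta> x)) > 0"
  shows "(\<forall>j<n. \<forall>y. U n X \<theta> j y \<noteq> -\<infinity> \<longrightarrow>
            (\<forall>v\<in>X j. 0 \<le> pj n X \<theta> j y v) \<and> (\<Sum>v\<in>X j. pj n X \<theta> j y v) \<le> 1)
       \<and> (\<forall>x\<in>PiE {..<n} X.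
            measure_pmf.prob (pass n X \<theta>) {Some x} / measure_pmf.prob (pass n X \<theta>) (range Some)
            = expo (\<theta> x) / (\<Sum>x'\<in>PiE {..<n} X. expo (\<theta> x')))"
proof (intro conjI allI impI ballI)
  fix j y v
  show "0 \<le> pj n X \<theta> j y v"
    by (rule pj_nonneg)
next
  fix j :: nat and y
  assume "j < n"
  with fin show "(\<Sum>v\<in>X j. pj n X \<theta> j y v) \<le> 1"
    by (rule sum_pj_le_1)
next
  fix x
  assume "x \<in> PiE {..<n} X"
  let ?E = "expo (U n X \<theta> 0 (\<lambda>_. undefined))"
  show "measure_pmf.prob (pass n X \<theta>) {Some x} / measure_pmf.prob (pass n X \<theta>) (range Some)
      = expo (\<theta> x) / (\<Sum>x'\<in>PiE {..<n} X. expo (\<theta> x'))"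
  proof (rule measure_pmf_Some_div_range_Some[where f="\<lambda>x. expo (\<theta> x)" and c="?E"])
    show "finite (PiE {..<n} X)"
      using fin by (intro finite_PiE) auto
    show "?E \<noteq> 0"
      using expo_U_pos[OF U_0_neq_MInf[OF Zpos]] by (metis less_irrefl)
    then show "pmf (pass n X \<theta>) (Some x') = expo (\<theta> x') / ?E" if "x' \<in> PiE {..<n} X" for x'
      using pmf_pass_Some[OF fin not_inf that] by (simp add: field_simps)
    show "set_pmf (pass n X \<theta>) \<subseteq> insert None (Some ` PiE {..<n} X)"
      by (rule set_pmf_pass[OF fin])
  qed fact
qed

end
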